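(* Let $Z=\mathrm{GF}(2)$ and let $K$ be an elementary abelian $2$-group, regarded as a vector space over $\mathrm{GF}(2)$ (written additively). Let $g:K^3\to\mathrm{GF}(2)$ be a trilinear form such that $g(x,x+y,y)=g(y,x+y,x)$ for all $x,y\in K$. Define $\theta:K^2\to\mathrm{GF}(2)$ by $\theta(x,y)=g(x,x+y,y)$, and let $Q=K\ltimes_\theta Z$ be the set $K\times Z$ with multiplication $(x,a)(y,b)=(x+y,\ a+b+\theta(x,y))$. Then $Q$ is a commutative A-loop of exponent $2$. Moreover, $(y,b)\in N_\mu(Q)$ if and only if $g(y,x,z)=g(x,z,y)$ for all $x,z\in K$.
   Context: A loop is a set with a binary operation and a neutral element in which all left and right translations are bijections. Its inner mapping group is generated by $L_{x,y}=L_{yx}^{-1}L_yL_x$, $R_{x,y}=R_{xy}^{-1}R_yR_x$, $T_x=L_x^{-1}R_x$; an A-loop is a loop whose inner mappings are all automorphisms. Exponent $2$ means $uu=1$ for all elements $u$. $N_\mu(Q)=\{y:(xy)z=x(yz)\ \forall x,z\}$ is the middle nucleus. *)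

theory Defs
  imports Main "HOL-Library.Z2"
begin

text \<open>Loops on the whole carrier type, with multiplication m and neutral element e.\<close>

definition loop :: "('q \<Rightarrow> 'q \<Rightarrow> 'q) \<Rightarrow> 'q \<Rightarrow> bool" where
  "loop m e \<longleftrightarrow> (\<forall>x. m e x = x \<and> m x e = x) \<and>
     (\<forall>x. bij (\<lambda>y. m x y)) \<and> (\<forall>x. bij (\<lambda>y. m y x))"

definition Lt :: "('q \<Rightarrow> 'q \<Rightarrow> 'q) \<Rightarrow> 'q \<Rightarrow> 'q \<Rightarrow> 'q" where
  "Lt m x = (\<lambda>y. m x y)"

definition Rt :: "('q \<Rightarrow> 'q \<Rightarrow> 'q) \<Rightarrow> 'q \<Rightarrow> 'q \<Rightarrow> 'q" where
  "Rt m x = (\<lambda>y. m y x)"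

definition Lxy :: "('q \<Rightarrow> 'q \<Rightarrow> 'q) \<Rightarrow> 'q \<Rightarrow> 'q \<Rightarrow> 'q \<Rightarrow> 'q" where
  "Lxy m x y = inv (Lt m (m y x)) \<circ> Lt m y \<circ> Lt m x"

definition Rxy :: "('q \<Rightarrow> 'q \<Rightarrow> 'q) \<Rightarrow> 'q \<Rightarrow> 'q \<Rightarrow> 'q \<Rightarrow> 'q" where
  "Rxy m x y = inv (Rt m (m x y)) \<circ> Rt m y \<circ> Rt m x"

definition Tx :: "('q \<Rightarrow> 'q \<Rightarrow> 'q) \<Rightarrow> 'q \<Rightarrow> 'q \<Rightarrow> 'q" where
  "Tx m x = inv (Lt m x) \<circ> Rt m x"

inductive_set inner_mappings :: "('q \<Rightarrow> 'q \<Rightarrow> 'q) \<Rightarrow> ('q \<Rightarrow> 'q) set"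
  for m :: "'q \<Rightarrow> 'q \<Rightarrow> 'q" where
  im_id: "id \<in> inner_mappings m"
| im_L: "Lxy m x y \<in> inner_mappings m"
| im_R: "Rxy m x y \<in> inner_mappings m"
| im_T: "Tx m x \<in> inner_mappings m"
| im_comp: "f \<in> inner_mappings m \<Longrightarrow> h \<in> inner_mappings m \<Longrightarrow> f \<circ> h \<in> inner_mappings m"
| im_inv: "f \<in> inner_mappings m \<Longrightarrow> inv f \<in> inner_mappings m"

definition automorphism :: "('q \<Rightarrow> 'q \<Rightarrow> 'q) \<Rightarrow> ('q \<Rightarrow> 'q) \<Rightarrow> bool" where
  "automorphism m f \<longleftrightarrow> bij f \<and> (\<forall>x y. f (m x y) = m (f x) (f y))"

definition A_loop :: "('q \<Rightarrow> 'q \<Rightarrow> 'q) \<Rightarrow> 'q \<Rightarrow> bool" where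
  "A_loop m e \<longleftrightarrow> loop m e \<and> (\<forall>f \<in> inner_mappings m. automorphism m f)"

definition commutative_op :: "('q \<Rightarrow> 'q \<Rightarrow> 'q) \<Rightarrow> bool" where
  "commutative_op m \<longleftrightarrow> (\<forall>x y. m x y = m y x)"

definition exponent2 :: "('q \<Rightarrow> 'q \<Rightarrow> 'q) \<Rightarrow> 'q \<Rightarrow> bool" where
  "exponent2 m e \<longleftrightarrow> (\<forall>u. m u u = e)"

definition middle_nucleus :: "('q \<Rightarrow> 'q \<Rightarrow> 'q) \<Rightarrow> 'q set" where
  "middle_nucleus m = {y. \<forall>x z. m (m x y) z = m x (m y z)}"

text \<open>Trilinear form K^3 \<rightarrow> GF(2); over GF(2), linearity is additivity.\<close>

definition trilinear :: "('k::ab_group_add \<Rightarrow> 'k \<Rightarrow> 'k \<Rightarrow> bit) \<Rightarrow> bool" where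
  "trilinear g \<longleftrightarrow>
     (\<forall>x x' y z. g (x + x') y z = g x y z + g x' y z) \<and>
     (\<forall>x y y' z. g x (y + y') z = g x y z + g x y' z) \<and>
     (\<forall>x y z z'. g x y (z + z') = g x y z + g x y z')"

definition ext_mult :: "('k::ab_group_add \<Rightarrow> 'k \<Rightarrow> bit) \<Rightarrow> 'k \<times> bit \<Rightarrow> 'k \<times> bit \<Rightarrow> 'k \<times> bit" where
  "ext_mult \<theta> p q = (fst p + fst q, snd p + snd q + \<theta> (fst p) (fst q))"

end

theory Submission
  imports Defs
begin

(* Q = K \<ltimes>_\<theta> Z is a central extension of the abelian group K by GF(2),
   so everything about Q is governed by the cocycle \<theta>.  Its failure to be associative
   is measured by the associator defect
     \<delta>(x,y,z) = \<theta>(x,y) + \<theta>(x+y,z) - \<theta>(y,z) - \<theta>(x,y+z),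
   since ((x,a)(y,b))(z,c) and (x,a)((y,b)(z,c)) differ exactly by \<delta>(x,y,z) in the
   second coordinate.  In particular (y,b) lies in the middle nucleus iff \<delta>(-,y,-)
   vanishes, and the inner mapping L_{(x,a),(y,b)} is (z,c) \<mapsto> (z, c - \<delta>(y,x,z)),
   which is an automorphism as soon as \<delta>(y,x,-) is additive. *)

text \<open>GF(2) is treated as a commutative ring of characteristic 2; the library's default
  rewriting of its addition into exclusive or would destroy the ring structure of the goals.\<close>

declare add_bit_eq_xor [simp del]

lemma bit_add_self [simp]: "(a::bit) + a = 0"
  using right_minus[of a] by simp

lemma bit_add_self_left [simp]: "(a::bit) + (a + b) = b"
  by (simp flip: add.assoc)

text \<open>In characteristic 2 an equation is equivalent to the vanishing of the sum of its sides;
  together with the cancellation rules above and AC-normalisation this decides identities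
  between sums in GF(2).\<close>

lemma bit_eq_iff_add: "(a::bit) = b \<longleftrightarrow> a + b = 0"
  by (metis bit_add_self bit_add_self_left add.right_neutral)

lemma automorphism_id: "automorphism m id"
  by (simp add: automorphism_def)

lemma automorphism_comp:
  "automorphism m f \<Longrightarrow> automorphism m h \<Longrightarrow> automorphism m (f \<circ> h)"
  by (simp add: automorphism_def bij_comp)

lemma automorphism_inv:
  assumes "automorphism m f"
  shows "automorphism m (inv f)"
proof -
  have bij: "bij f" and hom: "\<And>x y. f (m x y) = m (f x) (f y)"
    using assms by (auto simp: automorphism_def)
  have "inv f (m x y) = m (inv f x) (inv f y)" for x y
  proof (rule inv_f_eq[OF bij_is_inj[OF bij]])
    show "f (m (inv f x) (inv f y)) = m x y"
      using hom bij by (simp add: bij_is_surj surj_f_inv_f)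
  qed
  with bij show ?thesis
    by (simp add: automorphism_def bij_imp_bij_inv)
qed

lemma inner_mappings_automorphisms:
  assumes "\<And>x y. automorphism m (Lxy m x y)"
    and "\<And>x y. automorphism m (Rxy m x y)"
    and "\<And>x. automorphism m (Tx m x)"
    and "f \<in> inner_mappings m"
  shows "automorphism m f"
  using assms(4)
proof induction
  case im_id show ?case by (rule automorphism_id)
next
  case (im_L x y) show ?case by (rule assms(1))
next
  case (im_R x y) show ?case by (rule assms(2))
next
  case (im_T x) show ?case by (rule assms(3))
next
  case (im_comp f h) show ?case using im_comp.IH by (rule automorphism_comp)
next
  case (im_inv f) show ?case using im_inv.IH by (rule automorphism_inv)
qed

lemma loop_bij_Lt: "loop m e \<Longrightarrow> bij (Lt m x)"
  by (simp add: loop_def Lt_def)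

lemma loop_bij_Lxy: "loop m e \<Longrightarrow> bij (Lxy m x y)"
  unfolding Lxy_def by (intro bij_comp bij_imp_bij_inv loop_bij_Lt)

lemma commutative_Rt_eq_Lt: "commutative_op m \<Longrightarrow> Rt m x = Lt m x"
  by (simp add: commutative_op_def Rt_def Lt_def fun_eq_iff)

lemma commutative_Rxy_eq_Lxy: "commutative_op m \<Longrightarrow> Rxy m x y = Lxy m x y"
  unfolding Rxy_def Lxy_def by (simp add: commutative_Rt_eq_Lt commutative_op_def)

lemma commutative_Tx_id: "loop m e \<Longrightarrow> commutative_op m \<Longrightarrow> Tx m x = id"
  unfolding Tx_def
  by (simp add: commutative_Rt_eq_Lt bij_is_inj loop_bij_Lt)

lemma ext_mult_Pair [simp]:
  "ext_mult \<theta> (x, a) (y, b) = (x + y, a + b + \<theta> x y)"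
  by (simp add: ext_mult_def)

definition assoc_defect :: "('k::ab_group_add \<Rightarrow> 'k \<Rightarrow> bit) \<Rightarrow> 'k \<Rightarrow> 'k \<Rightarrow> 'k \<Rightarrow> bit" where
  "assoc_defect \<theta> x y z = (\<theta> x y + \<theta> (x + y) z) - (\<theta> y z + \<theta> x (y + z))"

lemma ext_mult_Lt_inverse:
  "Lt (ext_mult \<theta>) (x, a) \<circ> (\<lambda>(z, c). (z - x, c - a - \<theta> x (z - x))) = id"
  "(\<lambda>(z, c). (z - x, c - a - \<theta> x (z - x))) \<circ> Lt (ext_mult \<theta>) (x, a) = id"
  by (auto simp: fun_eq_iff Lt_def)

lemma ext_mult_Rt_inverse:
  "Rt (ext_mult \<theta>) (y, b) \<circ> (\<lambda>(z, c). (z - y, c - b - \<theta> (z - y) y)) = id"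
  "(\<lambda>(z, c). (z - y, c - b - \<theta> (z - y) y)) \<circ> Rt (ext_mult \<theta>) (y, b) = id"
  by (auto simp: fun_eq_iff Rt_def)

lemma ext_mult_loop:
  assumes "\<And>y. \<theta> 0 y = 0" and "\<And>x. \<theta> x 0 = 0"
  shows "loop (ext_mult \<theta>) (0, 0)"
proof -
  have "bij (Lt (ext_mult \<theta>) (x, a))" for x a
    by (rule o_bij[OF ext_mult_Lt_inverse(2,1)])
  then have "bij (\<lambda>q. ext_mult \<theta> p q)" for p
    unfolding Lt_def by (cases p) simp
  moreover have "bij (Rt (ext_mult \<theta>) (y, b))" for y b
    by (rule o_bij[OF ext_mult_Rt_inverse(2,1)])
  then have "bij (\<lambda>q. ext_mult \<theta> q p)" for p
    unfolding Rt_def by (cases p) simp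
  ultimately show ?thesis
    using assms by (simp add: loop_def ext_mult_def)
qed

lemma ext_mult_commutative:
  assumes "\<And>x y. \<theta> x y = \<theta> y x"
  shows "commutative_op (ext_mult \<theta>)"
  using assms by (simp add: commutative_op_def ext_mult_def add.commute)

lemma ext_mult_exponent2:
  fixes \<theta> :: "'k::ab_group_add \<Rightarrow> 'k \<Rightarrow> bit"
  assumes "\<And>x::'k. x + x = 0" and "\<And>x. \<theta> x x = 0"
  shows "exponent2 (ext_mult \<theta>) (0, 0)"
  unfolding exponent2_def ext_mult_def by (simp add: assms)

lemma ext_mult_middle_nucleus:
  "(y, b) \<in> middle_nucleus (ext_mult \<theta>) \<longleftrightarrow> (\<forall>x z. assoc_defect \<theta> x y z = 0)"
proof -
  have "ext_mult \<theta> (ext_mult \<theta> (x, a) (y, b)) (z, c) = ext_mult \<theta> (x, a) (ext_mult \<theta> (y, b) (z, c))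
        \<longleftrightarrow> assoc_defect \<theta> x y z = 0" for x a z c
    by (simp add: assoc_defect_def add.assoc)
      (subst bit_eq_iff_add, simp add: ac_simps)
  then show ?thesis
    by (auto simp: middle_nucleus_def simp del: ext_mult_Pair)
qed

lemma ext_mult_Lxy:
  "Lxy (ext_mult \<theta>) (x, a) (y, b) (z, c) = (z, c - assoc_defect \<theta> y x z)"
proof -
  have inv_Lt: "inv (Lt (ext_mult \<theta>) (w, d)) = (\<lambda>(z, c). (z - w, c - d - \<theta> w (z - w)))" for w d
    using inv_unique_comp[OF ext_mult_Lt_inverse] .
  have "Lxy (ext_mult \<theta>) (x, a) (y, b) (z, c) =
        (x + (y + z) - (y + x), b + (a + c + \<theta> x z) + \<theta> y (x + z) - (b + a + \<theta> y x)
           - \<theta> (y + x) (x + (y + z) - (y + x)))"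
    unfolding Lxy_def ext_mult_Pair inv_Lt by (simp add: Lt_def add.assoc)
  also have "\<dots> = (z, c - assoc_defect \<theta> y x z)"
    by (simp add: algebra_simps) (simp add: assoc_defect_def ac_simps)
  finally show ?thesis .
qed

lemma ext_mult_Lxy_automorphism:
  assumes loop: "loop (ext_mult \<theta>) (0, 0)"
    and additive: "\<And>x y z z'. assoc_defect \<theta> x y (z + z') = assoc_defect \<theta> x y z + assoc_defect \<theta> x y z'"
  shows "automorphism (ext_mult \<theta>) (Lxy (ext_mult \<theta>) u v)"
proof -
  obtain x a y b where uv: "u = (x, a)" "v = (y, b)" by fastforce
  have "Lxy (ext_mult \<theta>) u v (ext_mult \<theta> w w') =
        ext_mult \<theta> (Lxy (ext_mult \<theta>) u v w) (Lxy (ext_mult \<theta>) u v w')" for w w'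
    by (cases w; cases w') (simp add: uv ext_mult_Lxy additive algebra_simps)
  with loop_bij_Lxy[OF loop] show ?thesis
    by (simp add: automorphism_def)
qed

lemma ext_mult_A_loop:
  assumes loop: "loop (ext_mult \<theta>) (0, 0)"
    and comm: "commutative_op (ext_mult \<theta>)"
    and additive: "\<And>x y z z'. assoc_defect \<theta> x y (z + z') = assoc_defect \<theta> x y z + assoc_defect \<theta> x y z'"
  shows "A_loop (ext_mult \<theta>) (0, 0)"
proof -
  have L: "automorphism (ext_mult \<theta>) (Lxy (ext_mult \<theta>) u v)" for u v
    using ext_mult_Lxy_automorphism[OF loop additive] .
  show ?thesis
    unfolding A_loop_def
    using loop inner_mappings_automorphisms[OF L]
    by (simp add: commutative_Rxy_eq_Lxy[OF comm] commutative_Tx_id[OF loop comm] L automorphism_id)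
qed

lemma trilinear_additive:
  assumes "trilinear g"
  shows "g (x + x') y z = g x y z + g x' y z"
    and "g x (y + y') z = g x y z + g x y' z"
    and "g x y (z + z') = g x y z + g x y z'"
  using assms unfolding trilinear_def by blast+

lemma trilinear_zero:
  assumes "trilinear g"
  shows "g 0 y z = 0" and "g x 0 z = 0" and "g x y 0 = 0"
  using trilinear_additive(1)[OF assms, of 0 0] trilinear_additive(2)[OF assms, of x 0 0]
    trilinear_additive(3)[OF assms, of x y 0 0]
  by simp_all

text \<open>The key computation: for \<theta>(x,y) = g(x,x+y,y) all the terms of the defect cancel
  in pairs except g(y,x,z) - g(x,z,y).\<close>

lemma assoc_defect_trilinear:
  assumes "trilinear g"
  shows "assoc_defect (\<lambda>x y. g x (x + y) y) x y z = g y x z - g x z y"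
  by (simp add: assoc_defect_def trilinear_additive[OF assms] ac_simps)

theorem proposition4p3:
  fixes g :: "'k::ab_group_add \<Rightarrow> 'k \<Rightarrow> 'k \<Rightarrow> bit"
  assumes elem2: "\<forall>x::'k. x + x = 0"
    and tri: "trilinear g"
    and sym: "\<forall>x y. g x (x + y) y = g y (x + y) x"
  defines "\<theta> \<equiv> (\<lambda>x y. g x (x + y) y)"
  shows "loop (ext_mult \<theta>) (0, 0) \<and> commutative_op (ext_mult \<theta>) \<and>
         A_loop (ext_mult \<theta>) (0, 0) \<and> exponent2 (ext_mult \<theta>) (0, 0) \<and>
         (\<forall>y b. (y, b) \<in> middle_nucleus (ext_mult \<theta>) \<longleftrightarrow> (\<forall>x z. g y x z = g x z y))"
proof -
  have defect: "assoc_defect \<theta> x y z = g y x z - g x z y" for x y z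
    unfolding \<theta>_def using assoc_defect_trilinear[OF tri] .
  have loop: "loop (ext_mult \<theta>) (0, 0)"
    by (rule ext_mult_loop) (simp_all add: \<theta>_def trilinear_zero[OF tri])
  have comm: "commutative_op (ext_mult \<theta>)"
  proof (rule ext_mult_commutative)
    show "\<theta> x y = \<theta> y x" for x y
      using sym[rule_format, of x y] by (simp add: \<theta>_def add.commute)
  qed
  have "A_loop (ext_mult \<theta>) (0, 0)"
    using loop comm
    by (rule ext_mult_A_loop) (simp add: defect trilinear_additive[OF tri] algebra_simps)
  moreover have "exponent2 (ext_mult \<theta>) (0, 0)"
    using elem2 by (intro ext_mult_exponent2) (simp_all add: \<theta>_def trilinear_zero[OF tri])
  moreover have "(y, b) \<in> middle_nucleus (ext_mult \<theta>) \<longleftrightarrow> (\<forall>x z. g y x z = g x z y)" for y b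
    unfolding ext_mult_middle_nucleus defect right_minus_eq ..
  ultimately show ?thesis
    using loop comm by blast
qed

end
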